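(* Let $p,q$ be integers with $p\equiv 2\pmod 4$ and $q\equiv 3\pmod 4$, and let $(u_n)_{n\ge0}$ be defined by $u_0=0$, $u_1=1$ and $u_{n+2}=pu_{n+1}+qu_n$ for all $n\ge0$. Then for all integers $n\ge0$ and $k\ge1$, $$u_{n+2^k}\equiv u_n+2^k\pmod{2^{k+1}}.$$ *)

theory Defs
  imports Main "HOL-Number_Theory.Cong"
begin

end

theory Submission
  imports Defs
begin

text \<open>
  Modulo 4 the recurrence reads \<open>u (n+2) = 2 u (n+1) + 3 u n\<close>, which forces \<open>u n \<equiv> n\<close>;
  this is the case \<open>k = 1\<close>. For the induction step put \<open>N = 2^k\<close> and
  \<open>d n = u (n+N) - u n - N\<close>. The sequence \<open>d\<close> satisfies the same recurrence up to the
  constant \<open>(p+q-1) N\<close>, so if \<open>2N\<close> divides every \<open>d n\<close> then \<open>d (n+2) \<equiv> d n\<close> modulo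
  \<open>4N\<close> (because \<open>p\<close> and \<open>q - 1\<close> are even and \<open>4 dvd p + q - 1\<close>). As \<open>N\<close> is even this
  gives \<open>d (n+N) \<equiv> d n\<close>, and \<open>u (n+2N) - u n - 2N = (d (n+N) - d n) + 2 d n\<close>.
\<close>

lemma dvd_diff_add_even:
  fixes f :: "nat \<Rightarrow> 'a::comm_ring_1"
  assumes "\<And>n. m dvd f (n + 2) - f n"
  shows "m dvd f (n + 2 * j) - f n"
proof (induction j)
  case 0
  then show ?case by simp
next
  case (Suc j)
  have "f (n + 2 * Suc j) - f n = (f (n + 2 * j + 2) - f (n + 2 * j)) + (f (n + 2 * j) - f n)"
    by (simp add: algebra_simps)
  then show ?case
    using assms[of "n + 2 * j"] Suc by (metis dvd_add)
qed

locale linear_recurrence2 =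
  fixes p q :: int and u :: "nat \<Rightarrow> int"
  assumes rec: "u (n + 2) = p * u (n + 1) + q * u n"
begin

lemma shifted_difference_rec:
  fixes N :: nat
  defines "d \<equiv> \<lambda>n. u (n + N) - u n - int N"
  shows "d (n + 2) = p * d (n + 1) + q * d n + (p + q - 1) * int N"
proof -
  have "d (n + 2) = (p * u (n + N + 1) + q * u (n + N)) - (p * u (n + 1) + q * u n) - int N"
    unfolding d_def rec[symmetric] by (simp add: ac_simps)
  also have "\<dots> = p * d (n + 1) + q * d n + (p + q - 1) * int N"
    by (simp add: d_def algebra_simps)
  finally show ?thesis .
qed

lemma cong_index_mod_4:
  assumes "[p = 2] (mod 4)" and "[q = 3] (mod 4)" and "u 0 = 0" and "u 1 = 1"
  shows "[u n = int n] (mod 4)"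
proof (induction n rule: induct_nat_012)
  case 0
  then show ?case using assms by simp
next
  case 1
  then show ?case using assms by simp
next
  case (ge2 n)
  have "[p * u (n + 1) + q * u n = 2 * int (n + 1) + 3 * int n] (mod 4)"
    using assms(1,2) ge2 by (intro cong_add cong_mult) simp_all
  moreover have "[2 * int (n + 1) + 3 * int n = int (n + 2)] (mod 4)"
    by (simp add: cong_iff_dvd_diff)
  ultimately show ?case
    using rec[of n] by (simp add: numeral_2_eq_2 cong_trans)
qed

lemma cong_shift_double:
  fixes N :: nat
  assumes "even p" and "4 dvd p + q - 1" and "even N"
    and shift: "\<And>n. [u (n + N) = u n + int N] (mod 2 * int N)"
  shows "[u (n + 2 * N) = u n + 2 * int N] (mod 4 * int N)"
proof -
  define d where "d n = u (n + N) - u n - int N" for n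
  have d_dvd: "2 * int N dvd d n" for n
    using shift[of n] by (simp add: d_def cong_iff_dvd_diff diff_diff_eq)
  have d_period2: "4 * int N dvd d (n + 2) - d n" for n
  proof -
    have "d (n + 2) - d n = p * d (n + 1) + (q - 1) * d n + (p + q - 1) * int N"
      using shifted_difference_rec[where N = N and n = n] by (simp add: d_def algebra_simps)
    moreover have "4 * int N dvd p * d (n + 1)"
      using mult_dvd_mono[OF \<open>even p\<close> d_dvd] by simp
    moreover have "4 * int N dvd (q - 1) * d n"
    proof -
      have "even (q - 1)"
        using assms(1,2) by presburger
      from mult_dvd_mono[OF this d_dvd] show ?thesis
        by simp
    qed
    moreover have "4 * int N dvd (p + q - 1) * int N"
      using assms(2) by simp
    ultimately show ?thesis
      by simp
  qed
  have "4 * int N dvd d (n + N) - d n"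
    using dvd_diff_add_even[where f = d, OF d_period2, of n "N div 2"] \<open>even N\<close> by simp
  moreover have "4 * int N dvd 2 * d n"
    using mult_dvd_mono[OF dvd_refl[of 2] d_dvd[of n]] by simp
  moreover have "u (n + 2 * N) - (u n + 2 * int N) = (d (n + N) - d n) + 2 * d n"
    unfolding d_def mult_2 by (simp add: add.assoc)
  ultimately show ?thesis
    unfolding cong_iff_dvd_diff by (metis dvd_add)
qed

end

theorem mainTheorem8:
  fixes p q :: int and u :: "nat \<Rightarrow> int"
  assumes hp: "[p = 2] (mod 4)"
    and hq: "[q = 3] (mod 4)"
    and u0: "u 0 = 0"
    and u1: "u 1 = 1"
    and urec: "\<And>n. u (n + 2) = p * u (n + 1) + q * u n"
  shows "\<forall>n k. k \<ge> 1 \<longrightarrow> [u (n + 2 ^ k) = u n + 2 ^ k] (mod 2 ^ (k + 1))"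
proof (intro allI impI)
  interpret linear_recurrence2 p q u
    using urec by unfold_locales
  have "even p" and "4 dvd p + q - 1"
    using hp hq by (simp_all add: cong_iff_dvd_diff, presburger+)
  fix n k :: nat
  assume "k \<ge> 1"
  then show "[u (n + 2 ^ k) = u n + 2 ^ k] (mod 2 ^ (k + 1))"
  proof (induction k arbitrary: n rule: dec_induct)
    case base
    have "[u (n + 2) = int n + 2] (mod 4)"
      using cong_index_mod_4[OF hp hq u0 u1, of "n + 2"] by (simp add: add.commute)
    moreover have "[u n + 2 = int n + 2] (mod 4)"
      using cong_index_mod_4[OF hp hq u0 u1, of n] by (simp add: cong_add)
    ultimately have "[u (n + 2) = u n + 2] (mod 4)"
      by (metis cong_sym cong_trans)
    then show ?case
      by simp
  next
    case (step k)
    have "[u (m + 2 ^ k) = u m + int (2 ^ k)] (mod 2 * int (2 ^ k))" for m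
      using step.IH[of m] by simp
    from cong_shift_double[OF \<open>even p\<close> \<open>4 dvd p + q - 1\<close> _ this, of n] step.hyps
    have "[u (n + 2 * 2 ^ k) = u n + 2 * 2 ^ k] (mod 4 * 2 ^ k)"
      by simp
    moreover have "(2::int) ^ (Suc k + 1) = 4 * 2 ^ k"
      by simp
    ultimately show ?case
      by simp
  qed
qed

end
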